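(* Let $\mathcal L$ be a finite relational language, $\mathcal H$ a hereditary $\mathcal L$-property, and $\{(\mathcal L_i,\mathcal H_i,\alpha_i):i\in[m]\}$ ($m\ge1$) a totally bounded cover of $\mathcal H$. Let $c=\max\{|\mathcal L_j|:j\in[m]\}$, where $|\mathcal L_j|$ is the number of symbols of $\mathcal L_j$. Then for all sufficiently large $n$, $$n^{-c}\max\{|(\mathcal H_j)_n|:j\in[m]\}\le|\mathcal H_n|\le\sum_{j\in[m]}|(\mathcal H_j)_n|.$$
   Context: A hereditary property (in any finite language) is a class of structures closed under isomorphism and substructures; $\mathcal H_n$ denotes its members with universe $[n]$; it is trivial if $\mathcal H_n=\emptyset$ for all large $n$. Totally bounded: there is $k$ such that in every member, for every relation symbol $R(x_1,\dots,x_s)$ and every partition $[s]=I\cup J$ into nonempty sets, each assignment of $\bar x_I$ has fewer than $k$ extensions to $\bar x_J$ satisfying $R$. A relational interpretation $\alpha:\mathcal L\to\mathcal L'$ assigns to each relation symbol $R(\bar x)$ of $\mathcal L$ a Boolean combination $\alpha(R)(\bar x)$ of atomic formulas built from relation symbols of $\mathcal L'$ and variables in $\bar x$; for an $\mathcal L'$-structure $\mathcal N'$, $\overline\alpha(\mathcal N')$ is the $\mathcal L$-structure with the same universe in which each $R$ is interpreted as the set defined by $\alpha(R)$ in $\mathcal N'$. For a hereditary $\mathcal L'$-property $\mathcal H'$, $\overline\alpha$ is a relational interpretation of $\mathcal H'$ in $\mathcal H$ if $\overline\alpha(\mathcal N')\in\mathcal H$ for all $\mathcal N'\in\mathcal H'$,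 and for all $\mathcal M',\mathcal N'\in\mathcal H'$ with the same universe, $\overline\alpha(\mathcal M')=\overline\alpha(\mathcal N')$ iff $\mathcal M'$ and $\mathcal N'$ interpret every relation symbol of $\mathcal L'$ identically. A totally bounded cover of $\mathcal H$ is a finite set $\{(\mathcal L_i,\mathcal H_i,\alpha_i):i\in[m]\}$ where each $\mathcal L_i$ is a finite language of relation and constant symbols, $\mathcal H_i$ is a totally bounded hereditary $\mathcal L_i$-property, $\alpha_i:\mathcal L\to\mathcal L_i$ is a relational interpretation with $\overline{\alpha_i}$ a relational interpretation of $\mathcal H_i$ in $\mathcal H$, and $\mathcal H=\mathcal F\cup\bigcup_{i=1}^m\{\overline{\alpha_i}(\mathcal N):\mathcal N\in\mathcal H_i\}$ for some trivial hereditary $\mathcal L$-property $\mathcal F$. *)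

theory Defs
  imports Complex_Main
begin

record 's lang =
  rels :: "'s set"
  csyms :: "'s set"
  ar :: "'s \<Rightarrow> nat"

definition finite_lang :: "'s lang \<Rightarrow> bool" where
  "finite_lang L \<longleftrightarrow> finite (rels L) \<and> finite (csyms L) \<and> rels L \<inter> csyms L = {}"

definition finite_rel_lang :: "'s lang \<Rightarrow> bool" where
  "finite_rel_lang L \<longleftrightarrow> finite_lang L \<and> csyms L = {}"

definition lang_size :: "'s lang \<Rightarrow> nat" where
  "lang_size L = card (rels L) + card (csyms L)"

text \<open>Structures with universe a finite set of naturals (every finite structure
  is isomorphic to such a one). Relations are predicates on tuples (lists).\<close>
record 's struc =
  univ :: "nat set"
  rel :: "'s \<Rightarrow> nat list \<Rightarrow> bool"
  cst :: "'s \<Rightarrow> nat"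

text \<open>Canonical L-structures: relations only hold of tuples of the right length
  from the universe, for symbols of L; constants of L lie in the universe; junk
  values are fixed so that structures are determined by their L-interpretation.\<close>
definition is_struc :: "'s lang \<Rightarrow> 's struc \<Rightarrow> bool" where
  "is_struc L M \<longleftrightarrow> finite (univ M)
     \<and> (\<forall>R xs. rel M R xs \<longrightarrow> R \<in> rels L \<and> length xs = ar L R \<and> set xs \<subseteq> univ M)
     \<and> (\<forall>c \<in> csyms L. cst M c \<in> univ M)
     \<and> (\<forall>c. c \<notin> csyms L \<longrightarrow> cst M c = 0)
     \<and> more M = ()"

definition isomorphic :: "'s lang \<Rightarrow> 's struc \<Rightarrow> 's struc \<Rightarrow> bool" where
  "isomorphic L M N \<longleftrightarrow> (\<exists>f. bij_betw f (univ M) (univ N)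
     \<and> (\<forall>R xs. set xs \<subseteq> univ M \<longrightarrow> rel N R (map f xs) = rel M R xs)
     \<and> (\<forall>c \<in> csyms L. cst N c = f (cst M c)))"

definition substruc :: "'s lang \<Rightarrow> 's struc \<Rightarrow> 's struc \<Rightarrow> bool" where
  "substruc L N M \<longleftrightarrow> univ N \<subseteq> univ M
     \<and> (\<forall>R xs. rel N R xs = (set xs \<subseteq> univ N \<and> rel M R xs))
     \<and> (\<forall>c \<in> csyms L. cst N c = cst M c)"

definition hereditary :: "'s lang \<Rightarrow> 's struc set \<Rightarrow> bool" where
  "hereditary L H \<longleftrightarrow> (\<forall>M \<in> H. is_struc L M)
     \<and> (\<forall>M \<in> H. \<forall>N. is_struc L N \<and> isomorphic L M N \<longrightarrow> N \<in> H)
     \<and> (\<forall>M \<in> H. \<forall>N. is_struc L N \<and> substruc L N M \<longrightarrow> N \<in> H)"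

definition level :: "'s struc set \<Rightarrow> nat \<Rightarrow> 's struc set" where
  "level H n = {M \<in> H. univ M = {1..n}}"

definition trivial_prop :: "'s struc set \<Rightarrow> bool" where
  "trivial_prop H \<longleftrightarrow> (\<exists>N. \<forall>n\<ge>N. level H n = {})"

definition totally_bounded :: "'s lang \<Rightarrow> 's struc set \<Rightarrow> bool" where
  "totally_bounded L H \<longleftrightarrow> (\<exists>k::nat. \<forall>M \<in> H. \<forall>R \<in> rels L. \<forall>I J.
      I \<union> J = {0..<ar L R} \<and> I \<inter> J = {} \<and> I \<noteq> {} \<and> J \<noteq> {} \<longrightarrow>
      (\<forall>a::nat \<Rightarrow> nat. card {ys. rel M R ys \<and> (\<forall>i\<in>I. ys ! i = a i)} < k))"

datatype 't trm = V nat | C 't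

datatype 't fml = FTrue | Atom 't "'t trm list" | Eq "'t trm" "'t trm"
  | Neg "'t fml" | Conj "'t fml" "'t fml" | Disj "'t fml" "'t fml"

fun wf_trm :: "'t lang \<Rightarrow> nat \<Rightarrow> 't trm \<Rightarrow> bool" where
  "wf_trm L k (V i) = (i < k)"
| "wf_trm L k (C c) = (c \<in> csyms L)"

fun wf_fml :: "'t lang \<Rightarrow> nat \<Rightarrow> 't fml \<Rightarrow> bool" where
  "wf_fml L k FTrue = True"
| "wf_fml L k (Atom S ts) = (S \<in> rels L \<and> length ts = ar L S \<and> (\<forall>t\<in>set ts. wf_trm L k t))"
| "wf_fml L k (Eq t u) = (wf_trm L k t \<and> wf_trm L k u)"
| "wf_fml L k (Neg p) = wf_fml L k p"
| "wf_fml L k (Conj p q) = (wf_fml L k p \<and> wf_fml L k q)"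
| "wf_fml L k (Disj p q) = (wf_fml L k p \<and> wf_fml L k q)"

fun eval_trm :: "'t struc \<Rightarrow> nat list \<Rightarrow> 't trm \<Rightarrow> nat" where
  "eval_trm M xs (V i) = xs ! i"
| "eval_trm M xs (C c) = cst M c"

fun holds :: "'t struc \<Rightarrow> nat list \<Rightarrow> 't fml \<Rightarrow> bool" where
  "holds M xs FTrue = True"
| "holds M xs (Atom S ts) = rel M S (map (eval_trm M xs) ts)"
| "holds M xs (Eq t u) = (eval_trm M xs t = eval_trm M xs u)"
| "holds M xs (Neg p) = (\<not> holds M xs p)"
| "holds M xs (Conj p q) = (holds M xs p \<and> holds M xs q)"
| "holds M xs (Disj p q) = (holds M xs p \<or> holds M xs q)"

text \<open>A relational interpretation \<alpha> : L \<rightarrow> L' (L relational): each relation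
  symbol R of L of arity s is sent to a Boolean combination of atomic L'-formulas
  in the variables x_0..x_(s-1).\<close>
definition rel_interp :: "'s lang \<Rightarrow> 't lang \<Rightarrow> ('s \<Rightarrow> 't fml) \<Rightarrow> bool" where
  "rel_interp L L' \<alpha> \<longleftrightarrow> (\<forall>R \<in> rels L. wf_fml L' (ar L R) (\<alpha> R))"

definition interp_struc :: "'s lang \<Rightarrow> ('s \<Rightarrow> 't fml) \<Rightarrow> 't struc \<Rightarrow> 's struc" where
  "interp_struc L \<alpha> N = \<lparr>univ = univ N,
     rel = (\<lambda>R xs. R \<in> rels L \<and> length xs = ar L R \<and> set xs \<subseteq> univ N \<and> holds N xs (\<alpha> R)),
     cst = (\<lambda>_. 0)\<rparr>"

definition rel_interp_of :: "'s lang \<Rightarrow> 't lang \<Rightarrow> ('s \<Rightarrow> 't fml)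
    \<Rightarrow> 't struc set \<Rightarrow> 's struc set \<Rightarrow> bool" where
  "rel_interp_of L L' \<alpha> H' H \<longleftrightarrow>
     (\<forall>N \<in> H'. interp_struc L \<alpha> N \<in> H)
   \<and> (\<forall>M \<in> H'. \<forall>N \<in> H'. univ M = univ N \<longrightarrow>
        (interp_struc L \<alpha> M = interp_struc L \<alpha> N \<longleftrightarrow> (\<forall>S \<in> rels L'. rel M S = rel N S)))"

definition tb_cover :: "'s lang \<Rightarrow> 's struc set \<Rightarrow> nat \<Rightarrow> (nat \<Rightarrow> 't lang)
    \<Rightarrow> (nat \<Rightarrow> 't struc set) \<Rightarrow> (nat \<Rightarrow> 's \<Rightarrow> 't fml) \<Rightarrow> bool" where
  "tb_cover L H m Ls Hs \<alpha>s \<longleftrightarrow>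
     (\<forall>i \<in> {1..m}. finite_lang (Ls i) \<and> hereditary (Ls i) (Hs i)
        \<and> totally_bounded (Ls i) (Hs i)
        \<and> rel_interp L (Ls i) (\<alpha>s i)
        \<and> rel_interp_of L (Ls i) (\<alpha>s i) (Hs i) H)
   \<and> (\<exists>F. hereditary L F \<and> trivial_prop F
        \<and> H = F \<union> (\<Union>i \<in> {1..m}. interp_struc L (\<alpha>s i) ` Hs i))"

end

theory Submission
  imports Defs "HOL-Library.FuncSet"
begin

text \<open>Once the trivial part of the cover has no members of size \<open>n\<close>, every member of
  \<open>\<H>\<^sub>n\<close> is an \<open>\<alpha>\<^sub>j\<close>-image of a member of \<open>(\<H>\<^sub>j)\<^sub>n\<close>, which gives the upper bound.
  Conversely, \<open>\<alpha>\<^sub>j\<close> loses only the interpretation of constants, so a member of \<open>(\<H>\<^sub>j)\<^sub>n\<close> is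
  determined by its image in \<open>\<H>\<^sub>n\<close> and the values of its at most \<open>c\<close> constants in \<open>[n]\<close>;
  hence \<open>|(\<H>\<^sub>j)\<^sub>n| \<le> |\<H>\<^sub>n| \<cdot> n\<^sup>c\<close>.\<close>

lemma is_struc_if_hereditary: "hereditary L H \<Longrightarrow> M \<in> H \<Longrightarrow> is_struc L M"
  unfolding hereditary_def by blast

lemma struc_eqI:
  assumes "is_struc L M" "is_struc L N" "univ M = univ N" "rel M = rel N"
    and "\<And>c. c \<in> csyms L \<Longrightarrow> cst M c = cst N c"
  shows "M = N"
proof -
  have "cst M = cst N"
  proof
    fix c show "cst M c = cst N c"
      using assms(1,2,5) by (cases "c \<in> csyms L") (auto simp: is_struc_def)
  qed
  then show ?thesis
    using assms(1-4) by (intro struc.equality) (auto simp: is_struc_def)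
qed

lemma finite_strucs_on_interval:
  assumes "finite_lang L"
  shows "finite {M. is_struc L M \<and> univ M = {1..n}}"
proof -
  define tuples where
    "tuples = (\<Union>R\<in>rels L. {R} \<times> {xs. set xs \<subseteq> {1..n} \<and> length xs = ar L R})"
  let ?code = "\<lambda>M. ({(R, xs). rel M R xs}, restrict (cst M) (csyms L))"
  have "inj_on ?code {M. is_struc L M \<and> univ M = {1..n}}"
  proof (rule inj_onI)
    fix M N assume "M \<in> {M. is_struc L M \<and> univ M = {1..n}}"
      "N \<in> {M. is_struc L M \<and> univ M = {1..n}}" and "?code M = ?code N"
    then show "M = N"
      by (intro struc_eqI[of L]) (auto simp: fun_eq_iff restrict_def split: if_splits)
  qed
  moreover have "?code ` {M. is_struc L M \<and> univ M = {1..n}}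
      \<subseteq> Pow tuples \<times> (csyms L \<rightarrow>\<^sub>E {1..n})"
    unfolding tuples_def is_struc_def by auto
  moreover have "finite (Pow tuples \<times> (csyms L \<rightarrow>\<^sub>E {1..n}))"
    using assms unfolding tuples_def finite_lang_def
    by (auto intro!: finite_PiE finite_lists_length_eq)
  ultimately show ?thesis
    using finite_imageD finite_subset by blast
qed

lemma finite_level:
  assumes "finite_lang L" "hereditary L H"
  shows "finite (level H n)"
proof (rule finite_subset[OF _ finite_strucs_on_interval[OF assms(1)]])
  show "level H n \<subseteq> {M. is_struc L M \<and> univ M = {1..n}}"
    using is_struc_if_hereditary[OF assms(2)] by (auto simp: level_def)
qed

lemma eq_if_interp_struc_eq:
  assumes "hereditary L' H'" "rel_interp_of L L' \<alpha> H' H"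
    and "M \<in> H'" "N \<in> H'" "univ M = univ N"
    and "interp_struc L \<alpha> M = interp_struc L \<alpha> N"
    and "\<And>c. c \<in> csyms L' \<Longrightarrow> cst M c = cst N c"
  shows "M = N"
proof (rule struc_eqI[of L'])
  show M: "is_struc L' M" and N: "is_struc L' N"
    using assms(1,3,4) by (auto intro: is_struc_if_hereditary)
  have "\<forall>S\<in>rels L'. rel M S = rel N S"
    using assms(2-6) by (auto simp: rel_interp_of_def)
  with M N show "rel M = rel N"
    by (auto simp: is_struc_def fun_eq_iff)
qed (use assms(5,7) in auto)

lemma card_level_le_card_interp_level:
  assumes "finite_lang L'" "hereditary L' H'" "rel_interp_of L L' \<alpha> H' H"
    and "finite (level H n)"
  shows "card (level H' n) \<le> card (level H n) * n ^ card (csyms L')"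
proof -
  let ?code = "\<lambda>M. (interp_struc L \<alpha> M, restrict (cst M) (csyms L'))"
  have "inj_on ?code (level H' n)"
  proof (rule inj_onI)
    fix M N assume M: "M \<in> level H' n" and N: "N \<in> level H' n" and "?code M = ?code N"
    then have "interp_struc L \<alpha> M = interp_struc L \<alpha> N"
      and "\<And>c. c \<in> csyms L' \<Longrightarrow> cst M c = cst N c"
      by (simp_all add: fun_eq_iff) metis
    moreover have "M \<in> H'" "N \<in> H'" "univ M = univ N"
      using M N by (simp_all add: level_def)
    ultimately show "M = N"
      by (intro eq_if_interp_struc_eq[OF assms(2,3)])
  qed
  moreover have "?code ` level H' n \<subseteq> level H n \<times> (csyms L' \<rightarrow>\<^sub>E {1..n})"
  proof (rule image_subsetI, unfold mem_Times_iff fst_conv snd_conv, intro conjI)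
    fix M assume M: "M \<in> level H' n"
    then show "interp_struc L \<alpha> M \<in> level H n"
      using assms(3) by (auto simp: level_def rel_interp_of_def interp_struc_def)
    show "restrict (cst M) (csyms L') \<in> csyms L' \<rightarrow>\<^sub>E {1..n}"
      using M is_struc_if_hereditary[OF assms(2)] by (auto simp: level_def is_struc_def)
  qed
  moreover have "finite (level H n \<times> (csyms L' \<rightarrow>\<^sub>E {1..n}))"
    using assms(1,4) by (auto simp: finite_lang_def intro!: finite_PiE)
  ultimately have "card (level H' n) \<le> card (level H n \<times> (csyms L' \<rightarrow>\<^sub>E {1..n}))"
    by (rule card_inj_on_le)
  also have "\<dots> = card (level H n) * n ^ card (csyms L')"
    using assms(1) by (simp add: card_cartesian_product card_PiE finite_lang_def)
  finally show ?thesis .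
qed

lemma eventually_level_subset_cover:
  assumes "tb_cover L H m Ls Hs \<alpha>s"
  shows "\<exists>N. \<forall>n\<ge>N. level H n \<subseteq> (\<Union>i\<in>{1..m}. interp_struc L (\<alpha>s i) ` level (Hs i) n)"
proof -
  obtain F where F: "trivial_prop F" "H = F \<union> (\<Union>i\<in>{1..m}. interp_struc L (\<alpha>s i) ` Hs i)"
    using assms by (auto simp: tb_cover_def)
  obtain N where N: "\<And>n. n \<ge> N \<Longrightarrow> level F n = {}"
    using F(1) by (auto simp: trivial_prop_def)
  have "level H n \<subseteq> (\<Union>i\<in>{1..m}. interp_struc L (\<alpha>s i) ` level (Hs i) n)"
    if "n \<ge> N" for n
  proof
    fix M assume M: "M \<in> level H n"
    with N[OF that] have "M \<notin> F" by (auto simp: level_def)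
    with M F(2) obtain i M' where "i \<in> {1..m}" "M' \<in> Hs i" "M = interp_struc L (\<alpha>s i) M'"
      by (auto simp: level_def)
    with M show "M \<in> (\<Union>i\<in>{1..m}. interp_struc L (\<alpha>s i) ` level (Hs i) n)"
      by (auto simp: level_def interp_struc_def)
  qed
  then show ?thesis by blast
qed

lemma card_level_le_sum_cover:
  assumes "tb_cover L H m Ls Hs \<alpha>s"
    and "level H n \<subseteq> (\<Union>i\<in>{1..m}. interp_struc L (\<alpha>s i) ` level (Hs i) n)"
  shows "card (level H n) \<le> (\<Sum>i\<in>{1..m}. card (level (Hs i) n))"
proof -
  have fin: "finite (level (Hs i) n)" if "i \<in> {1..m}" for i
    using assms(1) that by (auto simp: tb_cover_def intro: finite_level)
  have "card (level H n) \<le> card (\<Union>i\<in>{1..m}. interp_struc L (\<alpha>s i) ` level (Hs i) n)"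
    using assms(2) fin by (intro card_mono) auto
  also have "\<dots> \<le> (\<Sum>i\<in>{1..m}. card (interp_struc L (\<alpha>s i) ` level (Hs i) n))"
    by (rule card_UN_le) simp
  also have "\<dots> \<le> (\<Sum>i\<in>{1..m}. card (level (Hs i) n))"
    by (intro sum_mono card_image_le fin)
  finally show ?thesis .
qed

lemma card_level_cover_le_power:
  assumes "finite_rel_lang L" "hereditary L H" "tb_cover L H m Ls Hs \<alpha>s"
    and "j \<in> {1..m}" "n \<ge> 1" "lang_size (Ls j) \<le> c"
  shows "card (level (Hs j) n) \<le> card (level H n) * n ^ c"
proof -
  have "finite (level H n)"
    using assms(1,2) by (auto simp: finite_rel_lang_def intro: finite_level)
  with assms(3,4) have "card (level (Hs j) n) \<le> card (level H n) * n ^ card (csyms (Ls j))"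
    by (intro card_level_le_card_interp_level) (auto simp: tb_cover_def)
  also have "\<dots> \<le> card (level H n) * n ^ c"
    using assms(5,6) by (intro mult_left_mono power_increasing) (auto simp: lang_size_def)
  finally show ?thesis .
qed

theorem mainTheorem14:
  fixes L :: "'s lang" and H :: "'s struc set" and m :: nat
    and Ls :: "nat \<Rightarrow> 't lang" and Hs :: "nat \<Rightarrow> 't struc set"
    and \<alpha>s :: "nat \<Rightarrow> 's \<Rightarrow> 't fml"
  assumes "finite_rel_lang L"
    and "hereditary L H"
    and "m \<ge> 1"
    and "tb_cover L H m Ls Hs \<alpha>s"
  defines "c \<equiv> Max ((\<lambda>j. lang_size (Ls j)) ` {1..m})"
  shows "\<exists>N. \<forall>n\<ge>N.
     real (Max ((\<lambda>j. card (level (Hs j) n)) ` {1..m})) / real n ^ c \<le> real (card (level H n))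
   \<and> card (level H n) \<le> (\<Sum>j\<in>{1..m}. card (level (Hs j) n))"
proof -
  obtain N where N: "\<And>n. n \<ge> N \<Longrightarrow>
      level H n \<subseteq> (\<Union>i\<in>{1..m}. interp_struc L (\<alpha>s i) ` level (Hs i) n)"
    using eventually_level_subset_cover[OF assms(4)] by blast
  have lower: "real (Max ((\<lambda>j. card (level (Hs j) n)) ` {1..m})) / real n ^ c
      \<le> real (card (level H n))" if "n \<ge> 1" for n
  proof -
    have "Max ((\<lambda>j. card (level (Hs j) n)) ` {1..m}) \<in> (\<lambda>j. card (level (Hs j) n)) ` {1..m}"
      using assms(3) by (intro Max_in) auto
    then obtain j where j: "j \<in> {1..m}"
      "Max ((\<lambda>j. card (level (Hs j) n)) ` {1..m}) = card (level (Hs j) n)"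
      by (metis (no_types, lifting) imageE)
    have "lang_size (Ls j) \<le> c"
      unfolding c_def using j(1) by (intro Max_ge) auto
    then have "card (level (Hs j) n) \<le> card (level H n) * n ^ c"
      using assms(1,2,4) j(1) that by (intro card_level_cover_le_power)
    then have "real (card (level (Hs j) n)) \<le> real (card (level H n)) * real n ^ c"
      by (metis of_nat_le_iff of_nat_mult of_nat_power)
    then show ?thesis
      using j(2) that by (simp add: divide_le_eq)
  qed
  show ?thesis
  proof (intro exI[of _ "max N 1"] allI impI conjI)
    fix n assume "n \<ge> max N 1"
    then show "real (Max ((\<lambda>j. card (level (Hs j) n)) ` {1..m})) / real n ^ c
        \<le> real (card (level H n))"
      and "card (level H n) \<le> (\<Sum>j\<in>{1..m}. card (level (Hs j) n))"
      using lower N card_level_le_sum_cover[OF assms(4)] by simp_all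
  qed
qed

end
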